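(* Let $T>0$ and let $\mathbb T$ be a nonempty closed $T$-periodic time scale. Then for every $x\in C^1_T$, $$\|x-\overline x\|_\infty\le \tfrac T2\,\|x^\Delta\|_\infty,$$ so that $k(\mathbb T)\le T/2$.
   Context: Time scale calculus in the sense of Hilger: $x^\Delta$ is the $\Delta$-derivative and $\int\cdot\,\Delta t$ the $\Delta$-integral. $\mathbb T$ is $T$-periodic if $\mathbb T+T=\mathbb T$. $C^1_T$ is the space of continuous $T$-periodic functions $x:\mathbb T\to\mathbb R$ that are $\Delta$-differentiable with continuous $\Delta$-derivative; $\|x\|_\infty=\sup_{[0,T]\cap\mathbb T}|x|$; $\overline x=\frac1T\int_0^Tx(t)\Delta t$. $k(\mathbb T)$ denotes the smallest constant $k\ge0$ such that $\|x-\overline x\|_\infty\le k\|x^\Delta\|_\infty$ for all $x\in C^1_T$. *)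

theory Defs
  imports "HOL-Analysis.Analysis"
begin

definition time_scale :: "real set \<Rightarrow> bool" where
  "time_scale TS \<longleftrightarrow> TS \<noteq> {} \<and> closed TS"

text \<open>Forward jump operator (convention: inf of the empty set is sup TS,
i.e. sigma t = t at a maximum) and backward jump operator.\<close>
definition fjump :: "real set \<Rightarrow> real \<Rightarrow> real" where
  "fjump TS t = (if {s\<in>TS. s > t} = {} then t else Inf {s\<in>TS. s > t})"

definition bjump :: "real set \<Rightarrow> real \<Rightarrow> real" where
  "bjump TS t = (if {s\<in>TS. s < t} = {} then t else Sup {s\<in>TS. s < t})"

definition tkappa :: "real set \<Rightarrow> real set" where
  "tkappa TS = {t\<in>TS. \<not> ((\<forall>s\<in>TS. s \<le> t) \<and> bjump TS t < t)}"

definition has_delta_derivative :: "real set \<Rightarrow> (real \<Rightarrow> real) \<Rightarrow> real \<Rightarrow> real \<Rightarrow> bool" where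
  "has_delta_derivative TS f D t \<longleftrightarrow>
     (\<forall>\<epsilon>>0. \<exists>\<delta>>0. \<forall>s\<in>TS. \<bar>s - t\<bar> < \<delta> \<longrightarrow>
        \<bar>(f (fjump TS t) - f s) - D * (fjump TS t - s)\<bar> \<le> \<epsilon> * \<bar>fjump TS t - s\<bar>)"

definition delta_deriv :: "real set \<Rightarrow> (real \<Rightarrow> real) \<Rightarrow> real \<Rightarrow> real" where
  "delta_deriv TS f t = (SOME D. has_delta_derivative TS f D t)"

definition delta_antideriv :: "real set \<Rightarrow> (real \<Rightarrow> real) \<Rightarrow> (real \<Rightarrow> real) \<Rightarrow> bool" where
  "delta_antideriv TS F f \<longleftrightarrow> (\<forall>t\<in>tkappa TS. has_delta_derivative TS F (f t) t)"

definition delta_integral :: "real set \<Rightarrow> (real \<Rightarrow> real) \<Rightarrow> real \<Rightarrow> real \<Rightarrow> real" where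
  "delta_integral TS f a b = (SOME I. \<exists>F. delta_antideriv TS F f \<and> I = F b - F a)"

definition periodic_ts :: "real set \<Rightarrow> real \<Rightarrow> bool" where
  "periodic_ts TS T \<longleftrightarrow> (\<lambda>t. t + T) ` TS = TS"

definition C1T :: "real set \<Rightarrow> real \<Rightarrow> (real \<Rightarrow> real) set" where
  "C1T TS T = {x. continuous_on TS x \<and> (\<forall>t\<in>TS. x (t + T) = x t) \<and>
      (\<forall>t\<in>tkappa TS. \<exists>D. has_delta_derivative TS x D t) \<and>
      continuous_on (tkappa TS) (delta_deriv TS x)}"

definition sup_norm :: "real set \<Rightarrow> real \<Rightarrow> (real \<Rightarrow> real) \<Rightarrow> real" where
  "sup_norm TS T f = Sup ((\<lambda>t. \<bar>f t\<bar>) ` ({0..T} \<inter> TS))"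

definition ts_mean :: "real set \<Rightarrow> real \<Rightarrow> (real \<Rightarrow> real) \<Rightarrow> real" where
  "ts_mean TS T x = delta_integral TS x 0 T / T"

definition k_const :: "real set \<Rightarrow> real \<Rightarrow> real" where
  "k_const TS T = Inf {k. k \<ge> 0 \<and> (\<forall>x\<in>C1T TS T.
      sup_norm TS T (\<lambda>t. x t - ts_mean TS T x) \<le> k * sup_norm TS T (delta_deriv TS x))}"

end

theory Submission
  imports Defs
begin

text \<open>Let \<open>M\<close> be the sup norm of \<open>x\<^sup>\<Delta>\<close> on \<open>[0, T]\<close>. The mean value inequality of the time scale
  calculus, a consequence of the induction principle for time scales, makes \<open>x\<close> Lipschitz with
  constant \<open>M\<close> there. Since \<open>x 0 = x T\<close>, two values \<open>x s\<close> and \<open>x t\<close> with \<open>s \<le> t\<close> differ by at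
  most \<open>M (t - s)\<close> and by at most \<open>M (T - (t - s))\<close>, hence by at most \<open>M T / 2\<close>. Applied to a
  \<open>\<Delta>\<close>-antiderivative, the same inequality puts the mean of \<open>x\<close> between the minimum and the
  maximum of \<open>x\<close> on \<open>[0, T]\<close>, so \<open>x\<close> also deviates from its mean by at most \<open>M T / 2\<close>.
  A \<open>\<Delta>\<close>-antiderivative is the ordinary integral of \<open>x\<close> composed with the floor map of the
  time scale (sending a real to the largest point of the time scale below it): the floor map is
  constant on every gap \<open>[t, \<sigma> t)\<close>, so the integral over the gap is \<open>x t (\<sigma> t - t)\<close>.\<close>

lemma fjump_eq_Inf:
  assumes "s \<in> TS" "t < s"
  shows "fjump TS t = Inf {s\<in>TS. s > t}"
  using assms unfolding fjump_def by auto

lemma fjump_ge: "t \<le> fjump TS t"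
  unfolding fjump_def by (auto intro: cInf_greatest)

lemma fjump_le:
  assumes "v \<in> TS" "t < v"
  shows "fjump TS t \<le> v"
  unfolding fjump_eq_Inf[OF assms] using assms by (intro cInf_lower) (auto intro: bdd_belowI[of _ t])

lemma fjump_eqI:
  assumes "c \<in> TS" "t < c" "\<And>v. v \<in> TS \<Longrightarrow> t < v \<Longrightarrow> c \<le> v"
  shows "fjump TS t = c"
proof -
  have "Inf {s\<in>TS. s > t} = c"
    using assms by (intro cInf_eq_minimum) auto
  then show ?thesis using fjump_eq_Inf[OF assms(1,2)] by simp
qed

lemma nonpos_if_le_pos_mult:
  fixes X c :: real
  assumes "\<And>e. 0 < e \<Longrightarrow> X \<le> e * c"
  shows "X \<le> 0"
proof (rule field_le_epsilon)
  fix \<epsilon> :: real assume "0 < \<epsilon>"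
  then have "X \<le> \<epsilon> / (\<bar>c\<bar> + 1) * c" by (intro assms) (simp add: add_pos_nonneg)
  also have "\<dots> \<le> \<epsilon> / (\<bar>c\<bar> + 1) * \<bar>c\<bar>" using \<open>0 < \<epsilon>\<close> by (intro mult_left_mono) auto
  also have "\<dots> \<le> 0 + \<epsilon>" using \<open>0 < \<epsilon>\<close> by (simp add: field_simps)
  finally show "X \<le> 0 + \<epsilon>" .
qed

lemma has_delta_derivative_jump:
  assumes "has_delta_derivative TS f D t" "t \<in> TS"
  shows "f (fjump TS t) - f t = D * (fjump TS t - t)"
proof -
  have "\<bar>f (fjump TS t) - f t - D * (fjump TS t - t)\<bar> \<le> e * \<bar>fjump TS t - t\<bar>" if "e > 0" for e
    using assms that unfolding has_delta_derivative_def by fastforce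
  then have "\<bar>f (fjump TS t) - f t - D * (fjump TS t - t)\<bar> \<le> 0"
    by (rule nonpos_if_le_pos_mult)
  then show ?thesis by simp
qed

lemma has_delta_derivative_uminus:
  assumes "has_delta_derivative TS f D t"
  shows "has_delta_derivative TS (\<lambda>s. - f s) (- D) t"
  using assms unfolding has_delta_derivative_def
  by (metis (no_types, lifting) abs_minus_cancel minus_diff_eq mult_minus_left minus_diff_minus)

lemma has_delta_derivative_imp_continuous:
  assumes "has_delta_derivative TS f D t" "t \<in> TS"
  shows "continuous (at t within TS) f"
  unfolding continuous_within_eps_delta
proof (intro allI impI)
  fix \<eta> :: real assume "\<eta> > 0"
  define \<sigma> where "\<sigma> = fjump TS t"
  define e where "e = \<eta> / (2 * (\<bar>\<sigma> - t\<bar> + 1))"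
  have pos: "0 < \<bar>\<sigma> - t\<bar> + 1" "0 < \<bar>D\<bar> + 1"
    by (simp_all add: add_nonneg_pos)
  have half: "\<And>c. 0 < c \<Longrightarrow> \<eta> / (2 * c) * c = \<eta> / 2" by simp
  have "e > 0" unfolding e_def using \<open>\<eta> > 0\<close> pos by simp
  then obtain d where "d > 0" and d: "\<And>s. s \<in> TS \<Longrightarrow> \<bar>s - t\<bar> < d \<Longrightarrow>
      \<bar>(f \<sigma> - f s) - D * (\<sigma> - s)\<bar> \<le> e * \<bar>\<sigma> - s\<bar>"
    using assms(1) unfolding has_delta_derivative_def \<sigma>_def by blast
  have jump: "f \<sigma> - f t = D * (\<sigma> - t)"
    using has_delta_derivative_jump[OF assms] by (simp add: \<sigma>_def)
  define \<delta> where "\<delta> = min (min d 1) (\<eta> / (2 * (\<bar>D\<bar> + 1)))"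
  have "\<delta> > 0" using \<open>d > 0\<close> \<open>\<eta> > 0\<close> pos by (simp add: \<delta>_def)
  moreover have "\<bar>f s - f t\<bar> < \<eta>" if s: "s \<in> TS" "\<bar>s - t\<bar> < \<delta>" for s
  proof -
    have "f t - f s = ((f \<sigma> - f s) - D * (\<sigma> - s)) + D * (t - s)"
      using jump by (simp add: algebra_simps)
    then have "\<bar>f s - f t\<bar> \<le> \<bar>(f \<sigma> - f s) - D * (\<sigma> - s)\<bar> + \<bar>D\<bar> * \<bar>s - t\<bar>"
      by (metis abs_minus_commute abs_mult abs_triangle_ineq)
    also have "\<bar>(f \<sigma> - f s) - D * (\<sigma> - s)\<bar> \<le> e * \<bar>\<sigma> - s\<bar>"
      using d s by (simp add: \<delta>_def)
    also have "e * \<bar>\<sigma> - s\<bar> \<le> e * (\<bar>\<sigma> - t\<bar> + 1)"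
      using s \<open>e > 0\<close> by (intro mult_left_mono) (auto simp: \<delta>_def)
    also have "\<bar>D\<bar> * \<bar>s - t\<bar> \<le> \<bar>D\<bar> * (\<eta> / (2 * (\<bar>D\<bar> + 1)))"
      using s by (intro mult_left_mono) (auto simp: \<delta>_def)
    also have "\<dots> < (\<bar>D\<bar> + 1) * (\<eta> / (2 * (\<bar>D\<bar> + 1)))"
      using \<open>\<eta> > 0\<close> pos by (intro mult_strict_right_mono) auto
    also have "e * (\<bar>\<sigma> - t\<bar> + 1) = \<eta> / 2"
      using half[OF pos(1)] by (simp add: e_def)
    also have "(\<bar>D\<bar> + 1) * (\<eta> / (2 * (\<bar>D\<bar> + 1))) = \<eta> / 2"
      using half[OF pos(2)] by (simp add: mult.commute)
    finally show ?thesis by simp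
  qed
  ultimately show "\<exists>\<delta>>0. \<forall>s\<in>TS. dist s t < \<delta> \<longrightarrow> dist (f s) (f t) < \<eta>"
    by (auto simp: dist_real_def)
qed

lemma Inf_in_closed_subset:
  fixes B :: "real set"
  assumes "B \<noteq> {}" "bdd_below B" "B \<subseteq> S" "closed S"
  shows "Inf B \<in> S"
  using closure_contains_Inf[OF assms(1,2)] closure_minimal[OF assms(3,4)] by blast

lemma Sup_in_closed_subset:
  fixes B :: "real set"
  assumes "B \<noteq> {}" "bdd_above B" "B \<subseteq> S" "closed S"
  shows "Sup B \<in> S"
  using closure_contains_Sup[OF assms(1,2)] closure_minimal[OF assms(3,4)] by blast

lemma left_limpt_or_fjump:
  fixes TS :: "real set"
  assumes cl: "closed TS" and "a \<in> TS" "c \<in> TS" "a < c"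
  obtains "c islimpt {s\<in>TS. a \<le> s \<and> s < c}"
    | r where "r \<in> TS" "a \<le> r" "r < c" "fjump TS r = c"
proof -
  define L where "L = {s\<in>TS. a \<le> s \<and> s < c}"
  have ne: "L \<noteq> {}" and bdd: "bdd_above L"
    using assms(2,4) by (auto simp: L_def intro: bdd_aboveI[of _ c])
  define r where "r = Sup L"
  have "L \<subseteq> TS \<inter> {a..c}" by (auto simp: L_def)
  from Sup_in_closed_subset[OF ne bdd this] have r: "r \<in> TS" "a \<le> r" "r \<le> c"
    using cl by (auto simp: r_def closed_Int)
  show thesis
  proof (cases "r = c")
    case True
    then have "c islimpt L"
      using closure_contains_Sup[OF ne bdd] by (auto simp: closure_def r_def L_def)
    then show thesis using that(1) by (simp add: L_def)
  next
    case False
    then have "r < c" using r by simp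
    have "fjump TS r = c"
    proof (rule fjump_eqI[OF assms(3) \<open>r < c\<close>])
      fix v assume "v \<in> TS" "r < v"
      then show "c \<le> v" using cSup_upper[OF _ bdd, of v] r(2) by (force simp: L_def r_def)
    qed
    then show thesis using that(2) r \<open>r < c\<close> by blast
  qed
qed

lemma time_scale_induct:
  fixes TS :: "real set" and a b :: real
  assumes cl: "closed TS" and "a \<in> TS" "b \<in> TS"
    and base: "P a"
    and right_scattered: "\<And>t. t \<in> TS \<Longrightarrow> a \<le> t \<Longrightarrow> t < b \<Longrightarrow> t < fjump TS t \<Longrightarrow> P t \<Longrightarrow>
      P (fjump TS t)"
    and right_dense: "\<And>t. t \<in> TS \<Longrightarrow> a \<le> t \<Longrightarrow> t < b \<Longrightarrow> fjump TS t = t \<Longrightarrow> P t \<Longrightarrow>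
      \<exists>\<delta>>0. \<forall>s\<in>TS. t < s \<and> s < t + \<delta> \<longrightarrow> P s"
    and left_dense: "\<And>t. t \<in> TS \<Longrightarrow> a < t \<Longrightarrow> t \<le> b \<Longrightarrow> t islimpt {s\<in>TS. a \<le> s \<and> s < t} \<Longrightarrow>
      (\<forall>s\<in>TS. a \<le> s \<and> s < t \<longrightarrow> P s) \<Longrightarrow> P t"
    and t: "t \<in> TS" "a \<le> t" "t \<le> b"
  shows "P t"
proof (rule ccontr)
  define B where "B = {u\<in>TS. a \<le> u \<and> u \<le> b \<and> \<not> P u}"
  assume "\<not> P t"
  then have ne: "B \<noteq> {}" using t by (auto simp: B_def)
  have bdd: "bdd_below B" by (rule bdd_belowI[of _ a]) (auto simp: B_def)
  define c where "c = Inf B"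
  have "B \<subseteq> TS \<inter> {a..b}" by (auto simp: B_def)
  from Inf_in_closed_subset[OF ne bdd this] have c: "c \<in> TS" "a \<le> c" "c \<le> b"
    using cl by (auto simp: c_def closed_Int)
  have le_B: "\<And>u. u \<in> B \<Longrightarrow> c \<le> u" unfolding c_def by (rule cInf_lower[OF _ bdd])
  have near_B: "\<And>v. c < v \<Longrightarrow> \<exists>u\<in>B. u < v" using cInf_less_iff[OF ne bdd] by (simp add: c_def)
  have below: "P u" if "u \<in> TS" "a \<le> u" "u < c" for u
    using that le_B[of u] c by (force simp: B_def)
  have "P c"
  proof (cases "c = a")
    case False
    then have "a < c" using c(2) by simp
    show "P c"
    proof (rule left_limpt_or_fjump[OF cl \<open>a \<in> TS\<close> c(1) \<open>a < c\<close>])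
      assume "c islimpt {s\<in>TS. a \<le> s \<and> s < c}"
      with left_dense[OF c(1) \<open>a < c\<close> c(3)] below show "P c" by blast
    next
      fix r assume r: "r \<in> TS" "a \<le> r" "r < c" "fjump TS r = c"
      with right_scattered[OF r(1,2)] below[OF r(1-3)] c(3) show "P c" by force
    qed
  qed (use base in simp)
  then have above_c: "c < u" if "u \<in> B" for u
    using le_B[OF that] that by (cases "u = c") (auto simp: B_def)
  then have "c < b" using ne by (force simp: B_def)
  consider "c < fjump TS c" | "fjump TS c = c" using fjump_ge[of c TS] by fastforce
  then show False
  proof cases
    case 1
    obtain u where u: "u \<in> B" "u < fjump TS c" using near_B[OF 1] by blast
    then have "fjump TS c \<le> u" using fjump_le above_c by (auto simp: B_def)
    then show False using u by simp
  next
    case 2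
    obtain \<delta> where "\<delta> > 0" and \<delta>: "\<forall>s\<in>TS. c < s \<and> s < c + \<delta> \<longrightarrow> P s"
      using right_dense[OF c(1,2) \<open>c < b\<close> 2 \<open>P c\<close>] by blast
    obtain u where "u \<in> B" "u < c + \<delta>" using near_B \<open>\<delta> > 0\<close> by force
    then show False using \<delta> above_c by (auto simp: B_def)
  qed
qed

lemma continuous_within_le_at_limpt:
  fixes g :: "real \<Rightarrow> real"
  assumes "continuous (at t within S) g" "t islimpt L" "L \<subseteq> S" "\<And>s. s \<in> L \<Longrightarrow> g s \<le> c"
  shows "g t \<le> c"
proof (rule tendsto_upperbound)
  show "(g \<longlongrightarrow> g t) (at t within L)"
    using continuous_within_subset[OF assms(1,3)] by (simp add: continuous_within)
  show "\<forall>\<^sub>F s in at t within L. g s \<le> c" using assms(4) by (auto simp: eventually_at_filter)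
  show "\<not> trivial_limit (at t within L)" using assms(2) by (simp add: trivial_limit_within)
qed

lemma delta_increment_le:
  fixes f f' :: "real \<Rightarrow> real"
  assumes cl: "closed TS" and ab: "a \<in> TS" "b \<in> TS" "a \<le> b"
    and der: "\<And>t. t \<in> TS \<Longrightarrow> a \<le> t \<Longrightarrow> t \<le> b \<Longrightarrow> has_delta_derivative TS f (f' t) t"
    and bound: "\<And>t. t \<in> TS \<Longrightarrow> a \<le> t \<Longrightarrow> t \<le> b \<Longrightarrow> f' t \<le> U"
  shows "f b - f a \<le> U * (b - a)"
proof -
  have "f b - f a - U * (b - a) \<le> e * (b - a)" if "e > 0" for e
  proof -
    define K where "K = U + e"
    have "f b - f a \<le> K * (b - a)"
    proof (rule time_scale_induct[OF cl ab(1,2), where P = "\<lambda>t. f t - f a \<le> K * (t - a)"])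
      fix t assume t: "t \<in> TS" "a \<le> t" "t < b" "t < fjump TS t" and IH: "f t - f a \<le> K * (t - a)"
      have "f (fjump TS t) - f t = f' t * (fjump TS t - t)"
        using has_delta_derivative_jump[OF der] t by simp
      also have "\<dots> \<le> K * (fjump TS t - t)"
        using bound[of t] t \<open>e > 0\<close> by (intro mult_right_mono) (auto simp: K_def)
      finally show "f (fjump TS t) - f a \<le> K * (fjump TS t - a)"
        using IH by (simp add: algebra_simps)
    next
      fix t assume t: "t \<in> TS" "a \<le> t" "t < b" "fjump TS t = t" and IH: "f t - f a \<le> K * (t - a)"
      obtain \<delta> where "\<delta> > 0" and \<delta>: "\<And>s. s \<in> TS \<Longrightarrow> \<bar>s - t\<bar> < \<delta> \<Longrightarrow>
          \<bar>(f t - f s) - f' t * (t - s)\<bar> \<le> e * \<bar>t - s\<bar>"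
        using der[of t] t \<open>e > 0\<close> unfolding has_delta_derivative_def by fastforce
      have "f s - f a \<le> K * (s - a)" if s: "s \<in> TS" "t < s" "s < t + \<delta>" for s
      proof -
        have "f s - f t \<le> f' t * (s - t) + e * (s - t)"
          using \<delta>[of s] s by (simp add: abs_le_iff algebra_simps)
        also have "\<dots> \<le> K * (s - t)"
          using bound[of t] t s by (simp add: K_def mult_right_mono distrib_right)
        finally show ?thesis using IH by (simp add: algebra_simps)
      qed
      then show "\<exists>\<delta>>0. \<forall>s\<in>TS. t < s \<and> s < t + \<delta> \<longrightarrow> f s - f a \<le> K * (s - a)"
        using \<open>\<delta> > 0\<close> by blast
    next
      fix t assume t: "t \<in> TS" "a < t" "t \<le> b" and limpt: "t islimpt {s\<in>TS. a \<le> s \<and> s < t}"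
        and IH: "\<forall>s\<in>TS. a \<le> s \<and> s < t \<longrightarrow> f s - f a \<le> K * (s - a)"
      have "continuous (at t within TS) (\<lambda>s. f s - f a - K * (s - a))"
        using has_delta_derivative_imp_continuous[OF der[of t]] t by (intro continuous_intros) auto
      from continuous_within_le_at_limpt[OF this limpt, of 0] IH
      show "f t - f a \<le> K * (t - a)" by auto
    qed (use ab in auto)
    then show ?thesis by (simp add: K_def algebra_simps)
  qed
  then have "f b - f a - U * (b - a) \<le> 0" by (rule nonpos_if_le_pos_mult)
  then show ?thesis by simp
qed

lemma delta_increment_ge:
  fixes f f' :: "real \<Rightarrow> real"
  assumes "closed TS" "a \<in> TS" "b \<in> TS" "a \<le> b"
    and "\<And>t. t \<in> TS \<Longrightarrow> a \<le> t \<Longrightarrow> t \<le> b \<Longrightarrow> has_delta_derivative TS f (f' t) t"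
    and "\<And>t. t \<in> TS \<Longrightarrow> a \<le> t \<Longrightarrow> t \<le> b \<Longrightarrow> L \<le> f' t"
  shows "L * (b - a) \<le> f b - f a"
  using delta_increment_le[of TS a b "\<lambda>s. - f s" "\<lambda>s. - f' s" "- L"] assms has_delta_derivative_uminus
  by force

lemma delta_increment_abs_le:
  fixes f f' :: "real \<Rightarrow> real"
  assumes "closed TS" "a \<in> TS" "b \<in> TS" "a \<le> b"
    and "\<And>t. t \<in> TS \<Longrightarrow> a \<le> t \<Longrightarrow> t \<le> b \<Longrightarrow> has_delta_derivative TS f (f' t) t"
    and bound: "\<And>t. t \<in> TS \<Longrightarrow> a \<le> t \<Longrightarrow> t \<le> b \<Longrightarrow> \<bar>f' t\<bar> \<le> M"
  shows "\<bar>f b - f a\<bar> \<le> M * (b - a)"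
proof -
  have "- M \<le> f' t \<and> f' t \<le> M" if "t \<in> TS" "a \<le> t" "t \<le> b" for t
    using bound[OF that] by (auto simp: abs_le_iff)
  then have "f b - f a \<le> M * (b - a)" "- M * (b - a) \<le> f b - f a"
    using delta_increment_le[OF assms(1-5), of M] delta_increment_ge[OF assms(1-5), of "- M"] by auto
  then show ?thesis by simp
qed

definition ts_floor :: "real set \<Rightarrow> real \<Rightarrow> real" where
  "ts_floor TS u = Sup {v\<in>TS. v \<le> u}"

lemma
  assumes "closed TS" "v \<in> TS" "v \<le> u"
  shows ts_floor_in: "ts_floor TS u \<in> TS"
    and ts_floor_le: "ts_floor TS u \<le> u"
    and ts_floor_ge: "v \<le> ts_floor TS u"
proof -
  have ne: "{v\<in>TS. v \<le> u} \<noteq> {}" and bdd: "bdd_above {v\<in>TS. v \<le> u}"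
    using assms(2,3) by (auto intro: bdd_aboveI[of _ u])
  show "ts_floor TS u \<in> TS"
    unfolding ts_floor_def by (rule Sup_in_closed_subset[OF ne bdd _ assms(1)]) auto
  show "ts_floor TS u \<le> u" unfolding ts_floor_def by (rule cSup_least[OF ne]) auto
  show "v \<le> ts_floor TS u" unfolding ts_floor_def using assms(2,3) by (intro cSup_upper bdd) auto
qed

lemma mono_ts_floor:
  assumes "closed TS" "\<And>u. \<exists>v\<in>TS. v \<le> u"
  shows "mono (ts_floor TS)"
proof
  fix u w :: real assume "u \<le> w"
  obtain v where v: "v \<in> TS" "v \<le> u" using assms(2) by blast
  have "ts_floor TS u \<in> TS" "ts_floor TS u \<le> w"
    using ts_floor_in[OF assms(1) v] ts_floor_le[OF assms(1) v] \<open>u \<le> w\<close> by auto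
  then show "ts_floor TS u \<le> ts_floor TS w" by (rule ts_floor_ge[OF assms(1)])
qed

lemma ts_floor_near_jump:
  assumes "closed TS" "t \<in> TS" "s \<in> TS"
    and u: "min s (fjump TS t) \<le> u" "u \<le> max s (fjump TS t)" "u \<noteq> fjump TS t"
    and right_dense: "fjump TS t < s \<Longrightarrow> fjump TS t = t"
  shows "\<bar>ts_floor TS u - t\<bar> \<le> \<bar>s - t\<bar>"
proof (cases "s \<le> fjump TS t")
  case True
  then have "s \<le> u" "u < fjump TS t" using u by auto
  note floor = ts_floor_ge[OF assms(1,3) \<open>s \<le> u\<close>] ts_floor_in[OF assms(1,3) \<open>s \<le> u\<close>]
    ts_floor_le[OF assms(1,3) \<open>s \<le> u\<close>]
  have "ts_floor TS u \<le> t"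
    using fjump_le[OF floor(2), of t] \<open>u < fjump TS t\<close> floor(3) by fastforce
  with floor(1) show ?thesis by linarith
next
  case False
  then have "t \<le> u" "u \<le> s" using u right_dense by auto
  then show ?thesis
    using ts_floor_ge[OF assms(1,2) \<open>t \<le> u\<close>] ts_floor_le[OF assms(1,2) \<open>t \<le> u\<close>] by linarith
qed

lemma integrable_continuous_comp_mono:
  fixes f g :: "real \<Rightarrow> real"
  assumes "continuous_on UNIV f" "mono g"
  shows "(\<lambda>u. f (g u)) integrable_on {a..b}"
proof -
  have "(\<lambda>u. f (g u)) \<in> borel_measurable borel"
    using measurable_compose[OF borel_measurable_mono[OF assms(2)] borel_measurable_continuous_onI[OF assms(1)]]
    by simp
  then have meas: "(\<lambda>u. f (g u)) \<in> borel_measurable (lebesgue_on {a..b})"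
    by (metis measurable_lborel2 measurable_restrict_space1 measurable_completion)
  have "compact (f ` {g a..g b})"
    by (rule compact_continuous_image) (use assms(1) continuous_on_subset in auto)
  then obtain B where B: "\<And>y. y \<in> f ` {g a..g b} \<Longrightarrow> norm y \<le> B"
    using compact_imp_bounded bounded_iff by metis
  have "norm (f (g u)) \<le> B" if "u \<in> {a..b}" for u
    using B that monoD[OF assms(2)] by auto
  then have "integrable (lebesgue_on {a..b}) (\<lambda>u. f (g u))"
    by (intro finite_measure.integrable_const_bound[OF _ _ meas, where B = B]
        finite_measure_lebesgue_on) auto
  then show ?thesis by (rule integrable_on_lebesgue_on) simp
qed

lemma integral_close_to_const:
  fixes h :: "real \<Rightarrow> real"
  assumes "p \<le> q" "h integrable_on {p..q}" "negligible N" "0 \<le> \<epsilon>"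
    and close: "\<And>u. u \<in> {p..q} - N \<Longrightarrow> \<bar>h u - c\<bar> \<le> \<epsilon>"
  shows "\<bar>integral {p..q} h - c * (q - p)\<bar> \<le> \<epsilon> * (q - p)"
proof -
  define h' where "h' u = (if u \<in> N then c else h u)" for u
  have eq: "integral {p..q} h = integral {p..q} h'"
    by (rule integral_spike[OF assms(3)]) (auto simp: h'_def)
  have "h' integrable_on {p..q}"
    by (rule integrable_spike[OF assms(2,3)]) (auto simp: h'_def)
  then have "((\<lambda>u. h' u - c) has_integral (integral {p..q} h' - c * (q - p))) {p..q}"
    using has_integral_diff[OF integrable_integral has_integral_const_real[of c p q]] assms(1)
    by (simp add: mult.commute)
  then have "norm (integral {p..q} h' - c * (q - p)) \<le> \<epsilon> * measure lborel (cbox p q)"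
    by (intro has_integral_bound[where f = "\<lambda>u. h' u - c"]) (use close assms(4) in \<open>auto simp: h'_def\<close>)
  then show ?thesis using eq assms(1) by simp
qed

lemma signed_integral_diff:
  fixes h :: "real \<Rightarrow> real"
  assumes hint: "\<And>a b. h integrable_on {a..b}" and "a \<le> b"
  shows "(integral {0..b} h - integral {b..0} h) - (integral {0..a} h - integral {a..0} h)
    = integral {a..b} h"
proof -
  have pos: "integral {t..0} h = 0" if "0 \<le> t" for t :: real
    using that by (cases "t = 0") auto
  have neg: "integral {0..t} h = 0" if "t \<le> 0" for t :: real
    using that by (cases "t = 0") auto
  consider "0 \<le> a" | "a < 0" "0 \<le> b" | "b < 0" using \<open>a \<le> b\<close> by linarith
  then show ?thesis
  proof cases
    case 1
    then show ?thesis using Henstock_Kurzweil_Integration.integral_combine[OF 1 \<open>a \<le> b\<close> hint] pos[of a] pos[of b] \<open>a \<le> b\<close> by simp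
  next
    case 2
    then show ?thesis using Henstock_Kurzweil_Integration.integral_combine[of a 0 b, OF _ _ hint] pos[of b] neg[of a] by simp
  next
    case 3
    then show ?thesis using Henstock_Kurzweil_Integration.integral_combine[of a b 0, OF \<open>a \<le> b\<close> _ hint] neg[of a] neg[of b] \<open>a \<le> b\<close> by simp
  qed
qed

lemma has_delta_derivative_floor_integral:
  fixes x h F :: "real \<Rightarrow> real"
  assumes cl: "closed TS" and t: "t \<in> TS" and cont: "continuous (at t within TS) x"
    and h: "\<And>u. h u = x (ts_floor TS u)" and hint: "\<And>a b. h integrable_on {a..b}"
    and F: "\<And>a b. a \<le> b \<Longrightarrow> F b - F a = integral {a..b} h"
  shows "has_delta_derivative TS F (x t) t"
  unfolding has_delta_derivative_def
proof (intro allI impI)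
  fix \<epsilon> :: real assume "\<epsilon> > 0"
  define \<sigma> where "\<sigma> = fjump TS t"
  obtain d where "d > 0" and d: "\<And>v. v \<in> TS \<Longrightarrow> \<bar>v - t\<bar> < d \<Longrightarrow> \<bar>x v - x t\<bar> < \<epsilon>"
    using cont \<open>\<epsilon> > 0\<close> unfolding continuous_within_eps_delta dist_real_def by blast
  define \<delta> where "\<delta> = (if t < \<sigma> then min d (\<sigma> - t) else d)"
  have "\<delta> > 0" using \<open>d > 0\<close> by (simp add: \<delta>_def)
  moreover have "\<bar>F \<sigma> - F s - x t * (\<sigma> - s)\<bar> \<le> \<epsilon> * \<bar>\<sigma> - s\<bar>" if s: "s \<in> TS" "\<bar>s - t\<bar> < \<delta>" for s
  proof -
    have close: "\<bar>h u - x t\<bar> \<le> \<epsilon>" if u: "u \<in> {min s \<sigma>..max s \<sigma>} - {\<sigma>}" for u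
    proof -
      have "\<sigma> < s \<Longrightarrow> \<sigma> = t" using s fjump_ge[of t TS] by (auto simp: \<sigma>_def \<delta>_def split: if_splits)
      then have "\<bar>ts_floor TS u - t\<bar> \<le> \<bar>s - t\<bar>"
        using ts_floor_near_jump[OF cl t s(1)] u by (auto simp: \<sigma>_def)
      moreover have "s \<le> u \<or> t \<le> u" using u fjump_ge[of t TS] by (auto simp: \<sigma>_def)
      then have "ts_floor TS u \<in> TS" using ts_floor_in[OF cl t] ts_floor_in[OF cl s(1)] by blast
      ultimately show ?thesis using d s by (force simp: h \<delta>_def split: if_splits)
    qed
    show ?thesis
    proof (cases "s \<le> \<sigma>")
      case True
      with integral_close_to_const[OF True hint, where N = "{\<sigma>}" and c = "x t" and \<epsilon> = \<epsilon>] close \<open>\<epsilon> > 0\<close>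
      show ?thesis by (simp add: F)
    next
      case False
      then have "\<sigma> \<le> s" by simp
      with integral_close_to_const[OF this hint, where N = "{\<sigma>}" and c = "x t" and \<epsilon> = \<epsilon>] close \<open>\<epsilon> > 0\<close>
      show ?thesis by (simp add: F[OF \<open>\<sigma> \<le> s\<close>, symmetric] abs_minus_commute algebra_simps)
    qed
  qed
  ultimately show "\<exists>\<delta>>0. \<forall>s\<in>TS. \<bar>s - t\<bar> < \<delta> \<longrightarrow>
      \<bar>F (fjump TS t) - F s - x t * (fjump TS t - s)\<bar> \<le> \<epsilon> * \<bar>fjump TS t - s\<bar>"
    unfolding \<sigma>_def by blast
qed

lemma delta_antiderivative_exists:
  fixes x :: "real \<Rightarrow> real"
  assumes cl: "closed TS" and unbounded: "\<And>u. \<exists>v\<in>TS. v \<le> u" and cont: "continuous_on TS x"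
  shows "\<exists>F. \<forall>t\<in>TS. has_delta_derivative TS F (x t) t"
proof -
  obtain xe where xe: "continuous_on UNIV xe" "\<And>v. v \<in> TS \<Longrightarrow> xe v = x v"
    using Tietze_unbounded[OF cont, of UNIV] cl by auto
  define h where "h u = xe (ts_floor TS u)" for u
  have h: "h u = x (ts_floor TS u)" for u
    using unbounded[of u] ts_floor_in[OF cl] xe(2) by (auto simp: h_def)
  have hint: "\<And>a b. h integrable_on {a..b}"
    unfolding h_def by (rule integrable_continuous_comp_mono[OF xe(1) mono_ts_floor[OF cl unbounded]])
  define F where "F t = integral {0..t} h - integral {t..0} h" for t
  have "\<And>a b. a \<le> b \<Longrightarrow> F b - F a = integral {a..b} h"
    unfolding F_def by (rule signed_integral_diff[OF hint])
  then have "has_delta_derivative TS F (x t) t" if "t \<in> TS" for t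
    using has_delta_derivative_floor_integral[OF cl that _ h hint] cont that
    by (simp add: continuous_on_eq_continuous_within)
  then show ?thesis by blast
qed

lemma delta_integral_eq_antiderivative_diff:
  assumes "delta_antideriv TS F f"
  shows "\<exists>G. delta_antideriv TS G f \<and> delta_integral TS f a b = G b - G a"
proof -
  have "\<exists>I G. delta_antideriv TS G f \<and> I = G b - G a" using assms by blast
  then show ?thesis unfolding delta_integral_def by (rule someI_ex)
qed

lemma periodic_ts_shift:
  assumes "periodic_ts TS T" "t \<in> TS"
  shows "t + T \<in> TS" and "t - T \<in> TS"
proof -
  show "t + T \<in> TS" using assms unfolding periodic_ts_def by blast
  from assms obtain s where "s \<in> TS" "t = s + T" unfolding periodic_ts_def by blast
  then show "t - T \<in> TS" by simp
qed

lemma periodic_ts_unbounded_below: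
  assumes "T > 0" "periodic_ts TS T" "t \<in> TS"
  shows "\<exists>v\<in>TS. v \<le> u"
proof -
  have shifted: "t - real n * T \<in> TS" for n
  proof (induction n)
    case (Suc n)
    then show ?case using periodic_ts_shift(2)[OF assms(2) Suc] by (simp add: algebra_simps)
  qed (use assms(3) in simp)
  obtain n where "t - u < real n * T" using reals_Archimedean3[OF assms(1)] by blast
  then show ?thesis using shifted[of n] by (intro bexI[of _ "t - real n * T"]) auto
qed

lemma periodic_ts_tkappa:
  assumes "T > 0" "periodic_ts TS T"
  shows "tkappa TS = TS"
  using periodic_ts_shift(1)[OF assms(2)] assms(1) unfolding tkappa_def
  by (fastforce simp: not_le)

lemma sup_norm_upper:
  assumes "closed TS" "continuous_on ({0..T} \<inter> TS) f" "t \<in> {0..T} \<inter> TS"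
  shows "\<bar>f t\<bar> \<le> sup_norm TS T f"
proof -
  have "compact ((\<lambda>t. \<bar>f t\<bar>) ` ({0..T} \<inter> TS))"
    using assms(1,2) by (intro compact_continuous_image continuous_intros compact_Int_closed) auto
  then have "bdd_above ((\<lambda>t. \<bar>f t\<bar>) ` ({0..T} \<inter> TS))"
    by (intro bounded_imp_bdd_above compact_imp_bounded)
  then show ?thesis unfolding sup_norm_def using assms(3) by (intro cSup_upper) auto
qed

lemma sup_norm_le:
  assumes "t \<in> {0..T} \<inter> TS" "\<And>t. t \<in> {0..T} \<inter> TS \<Longrightarrow> \<bar>f t\<bar> \<le> C"
  shows "sup_norm TS T f \<le> C"
  unfolding sup_norm_def using assms by (intro cSup_least) auto

lemma oscillation_le_half_period:
  fixes x :: "real \<Rightarrow> real"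
  assumes lip: "\<And>a b. a \<in> K \<Longrightarrow> b \<in> K \<Longrightarrow> a \<le> b \<Longrightarrow> \<bar>x b - x a\<bar> \<le> M * (b - a)"
    and K: "0 \<in> K" "T \<in> K" "K \<subseteq> {0..T}" and periodic: "x T = x 0"
    and "s \<in> K" "t \<in> K"
  shows "\<bar>x t - x s\<bar> \<le> T / 2 * M"
proof -
  have "\<bar>x t - x s\<bar> \<le> T / 2 * M" if st: "s \<in> K" "t \<in> K" "s \<le> t" for s t
  proof -
    have "\<bar>x t - x s\<bar> \<le> M * (t - s)" using lip st by blast
    moreover have "\<bar>x T - x t\<bar> \<le> M * (T - t)" "\<bar>x s - x 0\<bar> \<le> M * (s - 0)"
      using lip[of t T] lip[of 0 s] st K by auto
    moreover have "\<bar>x t - x s\<bar> \<le> \<bar>x T - x t\<bar> + \<bar>x s - x 0\<bar>"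
      using periodic by arith
    ultimately show ?thesis by (simp add: algebra_simps)
  qed
  then show ?thesis using \<open>s \<in> K\<close> \<open>t \<in> K\<close> by (cases "s \<le> t") (force simp: abs_minus_commute)+
qed

lemma ts_mean_bounds:
  fixes x :: "real \<Rightarrow> real"
  assumes "T > 0" and cl: "closed TS" and unbounded: "\<And>u. \<exists>v\<in>TS. v \<le> u"
    and "0 \<in> TS" "T \<in> TS" and tk: "tkappa TS = TS" and cont: "continuous_on TS x"
    and bounds: "\<And>t. t \<in> TS \<Longrightarrow> 0 \<le> t \<Longrightarrow> t \<le> T \<Longrightarrow> L \<le> x t \<and> x t \<le> U"
  shows "L \<le> ts_mean TS T x" "ts_mean TS T x \<le> U"
proof -
  obtain F where "delta_antideriv TS F x"
    using delta_antiderivative_exists[OF cl unbounded cont] unfolding delta_antideriv_def tk by blast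
  from delta_integral_eq_antiderivative_diff[OF this, of 0 T]
  obtain G where G: "\<And>t. t \<in> TS \<Longrightarrow> has_delta_derivative TS G (x t) t"
    and I: "delta_integral TS x 0 T = G T - G 0"
    unfolding delta_antideriv_def tk by blast
  have "L * (T - 0) \<le> G T - G 0" "G T - G 0 \<le> U * (T - 0)"
    using delta_increment_ge[OF cl \<open>0 \<in> TS\<close> \<open>T \<in> TS\<close>, of G x L]
      delta_increment_le[OF cl \<open>0 \<in> TS\<close> \<open>T \<in> TS\<close>, of G x U] G bounds \<open>T > 0\<close> by auto
  then show "L \<le> ts_mean TS T x" "ts_mean TS T x \<le> U"
    using \<open>T > 0\<close> by (simp_all add: ts_mean_def I field_simps)
qed

lemma C1T_deviation_from_mean_le:
  fixes TS :: "real set" and T :: real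
  assumes "T > 0" and ts: "time_scale TS" and per: "periodic_ts TS T" and "0 \<in> TS"
    and x: "x \<in> C1T TS T"
  shows "sup_norm TS T (\<lambda>t. x t - ts_mean TS T x) \<le> T / 2 * sup_norm TS T (delta_deriv TS x)"
proof -
  have cl: "closed TS" using ts by (simp add: time_scale_def)
  have tk: "tkappa TS = TS" by (rule periodic_ts_tkappa[OF \<open>T > 0\<close> per])
  have unbounded: "\<And>u. \<exists>v\<in>TS. v \<le> u" by (rule periodic_ts_unbounded_below[OF \<open>T > 0\<close> per \<open>0 \<in> TS\<close>])
  have "T \<in> TS" using periodic_ts_shift(1)[OF per \<open>0 \<in> TS\<close>] by simp
  define K where "K = {0..T} \<inter> TS"
  have K: "0 \<in> K" "T \<in> K" "K \<subseteq> {0..T}" "compact K"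
    using \<open>T > 0\<close> \<open>0 \<in> TS\<close> \<open>T \<in> TS\<close> cl by (auto simp: K_def intro: compact_Int_closed)
  have xc: "continuous_on TS x" and xp: "x T = x 0"
    and der: "\<And>t. t \<in> TS \<Longrightarrow> has_delta_derivative TS x (delta_deriv TS x t) t"
    and dc: "continuous_on TS (delta_deriv TS x)"
    using x \<open>0 \<in> TS\<close> unfolding C1T_def tk delta_deriv_def by (auto intro: someI_ex)
  define M where "M = sup_norm TS T (delta_deriv TS x)"
  have "\<bar>delta_deriv TS x t\<bar> \<le> M" if "t \<in> K" for t
    using sup_norm_upper[OF cl continuous_on_subset[OF dc]] that by (auto simp: K_def M_def)
  then have lip: "\<bar>x b - x a\<bar> \<le> M * (b - a)" if "a \<in> K" "b \<in> K" "a \<le> b" for a b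
    using that by (intro delta_increment_abs_le[OF cl _ _ _ der]) (auto simp: K_def)
  have osc: "\<bar>x t - x s\<bar> \<le> T / 2 * M" if "s \<in> K" "t \<in> K" for s t
    using oscillation_le_half_period[OF _ K(1-3) xp that] lip by blast
  have "continuous_on K x" using xc by (rule continuous_on_subset) (simp add: K_def)
  then obtain tm tM where "tm \<in> K" "tM \<in> K" and extremal: "\<And>t. t \<in> K \<Longrightarrow> x tm \<le> x t \<and> x t \<le> x tM"
    using continuous_attains_inf[OF K(4)] continuous_attains_sup[OF K(4)] K(1) by (metis empty_iff)
  then have "x tm \<le> x t \<and> x t \<le> x tM" if "t \<in> TS" "0 \<le> t" "t \<le> T" for t
    using that by (simp add: K_def)
  note mean = ts_mean_bounds[OF \<open>T > 0\<close> cl unbounded \<open>0 \<in> TS\<close> \<open>T \<in> TS\<close> tk xc this]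
  have "\<bar>x t - ts_mean TS T x\<bar> \<le> T / 2 * M" if "t \<in> K" for t
    using mean osc[OF \<open>tm \<in> K\<close> that] osc[OF that \<open>tM \<in> K\<close>] unfolding abs_le_iff by linarith
  then show ?thesis using K(1) unfolding M_def by (intro sup_norm_le[where t = 0]) (auto simp: K_def)
qed

theorem mainTheorem2:
  fixes TS :: "real set" and T :: real
  assumes "T > 0" and "time_scale TS" and "periodic_ts TS T" and "0 \<in> TS"
  shows "(\<forall>x\<in>C1T TS T.
            sup_norm TS T (\<lambda>t. x t - ts_mean TS T x) \<le> T / 2 * sup_norm TS T (delta_deriv TS x))
         \<and> k_const TS T \<le> T / 2"
proof
  show wirtinger: "\<forall>x\<in>C1T TS T.
      sup_norm TS T (\<lambda>t. x t - ts_mean TS T x) \<le> T / 2 * sup_norm TS T (delta_deriv TS x)"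
    using C1T_deviation_from_mean_le[OF assms] by blast
  show "k_const TS T \<le> T / 2"
    unfolding k_const_def using wirtinger \<open>T > 0\<close> by (intro cInf_lower) (auto intro: bdd_belowI[of _ 0])
qed

end
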